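(* Let $L$ be a finite-dimensional Lie algebra over a field of characteristic zero. Then $E(L)$ is a characteristic ideal of $L$ (an ideal invariant under every derivation of $L$), and consequently $E(L)\subseteq N(L)$.
   Context: For $x\in L$, $\operatorname{ad}x:L\to L$ is $\operatorname{ad}x(y)=[y,x]$, and $E_L(x)=\{y\in L\mid (\operatorname{ad}x)^n(y)=0 \text{ for some } n\in\mathbb{N}\}$. An element $y$ is an Engel element of $L$ if $y\in E_L(x)$ for all $x\in L$; $E(L)$ denotes the set of all Engel elements of $L$. $N(L)$ denotes the nilradical of $L$, i.e. its largest nilpotent ideal. *)

theory Defs
  imports Complex_Main
begin

text \<open>A Lie algebra over the field 'k: the carrier is the whole type 'L, with scalar
multiplication sc and bracket br.\<close>

definition lie_algebra :: "('k::field \<Rightarrow> 'L::ab_group_add \<Rightarrow> 'L) \<Rightarrow> ('L \<Rightarrow> 'L \<Rightarrow> 'L) \<Rightarrow> bool" where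
  "lie_algebra sc br \<longleftrightarrow>
     vector_space sc \<and>
     (\<forall>x. Vector_Spaces.linear sc sc (br x)) \<and>
     (\<forall>y. Vector_Spaces.linear sc sc (\<lambda>x. br x y)) \<and>
     (\<forall>x. br x x = 0) \<and>
     (\<forall>x y z. br x (br y z) + br y (br z x) + br z (br x y) = 0)"

definition finite_dimensional :: "('k::field \<Rightarrow> 'L::ab_group_add \<Rightarrow> 'L) \<Rightarrow> bool" where
  "finite_dimensional sc \<longleftrightarrow> (\<exists>B. finite B \<and> module.span sc B = UNIV)"

definition ad :: "('L \<Rightarrow> 'L \<Rightarrow> 'L) \<Rightarrow> 'L \<Rightarrow> 'L \<Rightarrow> 'L" where
  "ad br x = (\<lambda>y. br y x)"

definition engel_set :: "('L \<Rightarrow> 'L \<Rightarrow> 'L) \<Rightarrow> 'L \<Rightarrow> 'L::zero set" where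
  "engel_set br x = {y. \<exists>n. (ad br x ^^ n) y = 0}"

definition engel_elements :: "('L \<Rightarrow> 'L \<Rightarrow> 'L) \<Rightarrow> 'L::zero set" where
  "engel_elements br = {y. \<forall>x. y \<in> engel_set br x}"

definition lie_ideal :: "('k::field \<Rightarrow> 'L::ab_group_add \<Rightarrow> 'L) \<Rightarrow> ('L \<Rightarrow> 'L \<Rightarrow> 'L) \<Rightarrow> 'L set \<Rightarrow> bool" where
  "lie_ideal sc br I \<longleftrightarrow> module.subspace sc I \<and> (\<forall>x\<in>I. \<forall>y. br x y \<in> I)"

definition derivation :: "('k::field \<Rightarrow> 'L::ab_group_add \<Rightarrow> 'L) \<Rightarrow> ('L \<Rightarrow> 'L \<Rightarrow> 'L) \<Rightarrow> ('L \<Rightarrow> 'L) \<Rightarrow> bool" where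
  "derivation sc br D \<longleftrightarrow> Vector_Spaces.linear sc sc D \<and>
     (\<forall>x y. D (br x y) = br (D x) y + br x (D y))"

definition characteristic_ideal :: "('k::field \<Rightarrow> 'L::ab_group_add \<Rightarrow> 'L) \<Rightarrow> ('L \<Rightarrow> 'L \<Rightarrow> 'L) \<Rightarrow> 'L set \<Rightarrow> bool" where
  "characteristic_ideal sc br I \<longleftrightarrow> lie_ideal sc br I \<and>
     (\<forall>D. derivation sc br D \<longrightarrow> (\<forall>x\<in>I. D x \<in> I))"

fun lower_central :: "('k::field \<Rightarrow> 'L::ab_group_add \<Rightarrow> 'L) \<Rightarrow> ('L \<Rightarrow> 'L \<Rightarrow> 'L) \<Rightarrow> 'L set \<Rightarrow> nat \<Rightarrow> 'L set" where
  "lower_central sc br I 0 = I"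
| "lower_central sc br I (Suc k) =
     module.span sc {br a b | a b. a \<in> lower_central sc br I k \<and> b \<in> I}"

definition nilpotent_set :: "('k::field \<Rightarrow> 'L::ab_group_add \<Rightarrow> 'L) \<Rightarrow> ('L \<Rightarrow> 'L \<Rightarrow> 'L) \<Rightarrow> 'L set \<Rightarrow> bool" where
  "nilpotent_set sc br I \<longleftrightarrow> (\<exists>k. lower_central sc br I k = {0})"

text \<open>N(L): the nilradical, the sum (span of the union) of all nilpotent ideals;
in finite dimension this is the largest nilpotent ideal.\<close>
definition nilradical :: "('k::field \<Rightarrow> 'L::ab_group_add \<Rightarrow> 'L) \<Rightarrow> ('L \<Rightarrow> 'L \<Rightarrow> 'L) \<Rightarrow> 'L set" where
  "nilradical sc br = module.span sc (\<Union>{I. lie_ideal sc br I \<and> nilpotent_set sc br I})"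

end

theory Submission
  imports Defs "HOL-Computational_Algebra.Polynomial"
begin

text \<open>
  Kernels of powers of a linear map stabilise within \<open>d = dim L\<close> steps, so \<open>y\<close> is Engel
  iff \<open>(ad x)\<^sup>d y = 0\<close> for all \<open>x\<close>; hence \<open>E(L)\<close> is a subspace. For a derivation
  \<open>D\<close> and an Engel element \<open>y\<close>, the vector \<open>(ad (x + t D x))\<^sup>d y\<close> vanishes for every
  scalar \<open>t\<close>. It is a polynomial in \<open>t\<close> whose linear coefficient is
  \<open>D ((ad x)\<^sup>d y) - (ad x)\<^sup>d (D y)\<close>; over an infinite field this coefficient must
  vanish, so \<open>D y\<close> is again Engel. Inner derivations make \<open>E(L)\<close> an ideal.

  Every \<open>ad x\<close> then acts nilpotently on the ideal \<open>E(L)\<close>, and Engel's theorem (for a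
  subalgebra acting nilpotently on a quotient \<open>V/U\<close>) yields a series
  \<open>0 = Z\<^sub>0 \<subset> Z\<^sub>1 \<subset> \<dots> \<subset> Z\<^sub>r = E(L)\<close> with
  \<open>[Z\<^sub>i\<^sub>+\<^sub>1, L] \<subseteq> Z\<^sub>i\<close>. Hence \<open>E(L)\<close> is a nilpotent ideal and lies in the
  nilradical.
\<close>

text \<open>\<open>pencil_coeff A B y n k\<close> is the coefficient of \<open>t\<^sup>k\<close> in \<open>(A + t B)\<^sup>n y\<close>.\<close>

fun pencil_coeff :: "('L::ab_group_add \<Rightarrow> 'L) \<Rightarrow> ('L \<Rightarrow> 'L) \<Rightarrow> 'L \<Rightarrow> nat \<Rightarrow> nat \<Rightarrow> 'L" where
  "pencil_coeff A B y 0 k = (if k = 0 then y else 0)"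
| "pencil_coeff A B y (Suc n) k =
     A (pencil_coeff A B y n k) + (case k of 0 \<Rightarrow> 0 | Suc j \<Rightarrow> B (pencil_coeff A B y n j))"

lemma pencil_coeff_eq_0:
  assumes "A 0 = 0" "B 0 = 0" "n < k"
  shows "pencil_coeff A B y n k = 0"
  using assms(3)
proof (induction n arbitrary: k)
  case (Suc n)
  then show ?case using assms(1,2) by (cases k) auto
qed simp

lemma pencil_coeff_0: "pencil_coeff A B y n 0 = (A ^^ n) y"
  by (induction n) auto

lemma funpow_preserves:
  assumes "\<And>x. x \<in> U \<Longrightarrow> f x \<in> U" "x \<in> U"
  shows "(f ^^ n) x \<in> U"
  by (induction n) (use assms in auto)

lemma funpow_last_not_in:
  assumes "x \<notin> U" "(f ^^ m) x \<in> U"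
  obtains j where "(f ^^ j) x \<notin> U" "f ((f ^^ j) x) \<in> U"
proof -
  have "\<exists>j. (f ^^ j) x \<notin> U \<and> f ((f ^^ j) x) \<in> U"
    using assms(2)
  proof (induction m)
    case 0
    with assms(1) show ?case by simp
  next
    case (Suc m)
    then show ?case by (cases "(f ^^ m) x \<in> U") auto
  qed
  then show thesis using that by blast
qed

context vector_space
begin

interpretation endo: vector_space_pair scale scale ..

lemma linear_funpow:
  assumes "Vector_Spaces.linear scale scale f"
  shows "Vector_Spaces.linear scale scale (f ^^ n)"
proof (induction n)
  case 0
  show ?case using linear_id by (simp add: id_def)
next
  case (Suc n)
  then show ?case using Vector_Spaces.linear_compose[OF Suc assms] by (simp add: o_def)
qed

lemma subspace_funpow_preimage:
  assumes "Vector_Spaces.linear scale scale f" "subspace U"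
  shows "subspace {v. (f ^^ n) v \<in> U}"
  using endo.linear_subspace_vimage[OF linear_funpow[OF assms(1)] assms(2)] by (simp add: vimage_def)

lemma funpow_pencil_expansion:
  assumes A: "Vector_Spaces.linear scale scale A" and B: "Vector_Spaces.linear scale scale B"
  shows "((\<lambda>v. A v + t *s B v) ^^ n) y = (\<Sum>k\<le>n. t ^ k *s pencil_coeff A B y n k)"
proof (induction n)
  case (Suc n)
  let ?c = "pencil_coeff A B y n"
  have "((\<lambda>v. A v + t *s B v) ^^ Suc n) y
      = (\<Sum>k\<le>n. t ^ k *s A (?c k)) + (\<Sum>k\<le>n. t ^ Suc k *s B (?c k))"
    by (simp add: Suc endo.linear_sum[OF A] endo.linear_sum[OF B] endo.linear_scale[OF A]
        endo.linear_scale[OF B] scale_sum_right mult.commute)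
  also have "\<dots> = (\<Sum>k\<le>Suc n. t ^ k *s A (?c k))
      + (\<Sum>k\<le>Suc n. t ^ k *s (case k of 0 \<Rightarrow> 0 | Suc j \<Rightarrow> B (?c j)))"
  proof -
    have "(\<Sum>k\<le>Suc n. t ^ k *s A (?c k)) = (\<Sum>k\<le>n. t ^ k *s A (?c k))"
      by (simp add: pencil_coeff_eq_0 endo.linear_0[OF A] endo.linear_0[OF B])
    moreover have "(\<Sum>k\<le>Suc n. t ^ k *s (case k of 0 \<Rightarrow> 0 | Suc j \<Rightarrow> B (?c j)))
        = (\<Sum>k\<le>n. t ^ Suc k *s B (?c k))"
      by (subst sum.atMost_Suc_shift) simp
    ultimately show ?thesis by simp
  qed
  also have "\<dots> = (\<Sum>k\<le>Suc n. t ^ k *s pencil_coeff A B y (Suc n) k)"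
    by (simp add: sum.distrib scale_right_distrib)
  finally show ?case .
qed simp

lemma funpow_commutator:
  assumes A: "Vector_Spaces.linear scale scale A" and DA: "\<And>v. D (A v) = A (D v) + B v"
  shows "(A ^^ n) (D y) = D ((A ^^ n) y) - pencil_coeff A B y n 1"
proof (induction n)
  case (Suc n)
  have "(A ^^ Suc n) (D y) = A (D ((A ^^ n) y)) - A (pencil_coeff A B y n 1)"
    by (simp add: Suc endo.linear_diff[OF A])
  also have "\<dots> = D ((A ^^ Suc n) y) - pencil_coeff A B y (Suc n) 1"
    using DA[of "(A ^^ n) y"] by (simp add: pencil_coeff_0 algebra_simps)
  finally show ?case .
qed simp

lemma coeff_eq_0_if_polynomial_vanishes:
  assumes inf: "infinite (UNIV :: 'a set)"
    and vanish: "\<And>t. (\<Sum>k\<le>n. t ^ k *s c k) = 0" and "i \<le> n"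
  shows "c i = 0"
proof -
  obtain B where B: "independent B" "span B = UNIV"
    using basis_exists[of UNIV] by (metis span_superset subset_antisym top_greatest span_mono)
  have "representation B (c i) b = 0" for b
  proof -
    interpret coord: vector_space_pair scale "(*) :: 'a \<Rightarrow> 'a \<Rightarrow> 'a"
      by unfold_locales (simp_all add: algebra_simps)
    define r where "r v = representation B v b" for v
    have r: "Vector_Spaces.linear scale (*) r"
      unfolding r_def by (rule linear_representation[OF B])
    define p where "p = (\<Sum>k\<le>n. monom (r (c k)) k)"
    have "poly p t = r (\<Sum>k\<le>n. t ^ k *s c k)" for t
      by (simp add: p_def poly_sum poly_monom coord.linear_sum[OF r] coord.linear_scale[OF r]
          mult.commute)
    then have "{t. poly p t = 0} = UNIV"
      using vanish coord.linear_0[OF r] by simp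
    then have "p = 0"
      using poly_roots_finite inf by fastforce
    then have "coeff p i = 0" by simp
    then show ?thesis
      using \<open>i \<le> n\<close> by (simp add: p_def coeff_sum r_def)
  qed
  then show ?thesis
    using sum_nonzero_representation_eq[OF B(1), of "c i"] B(2) by simp
qed

end

context finite_dimensional_vector_space
begin

lemma dim_psubset_subspace:
  assumes "subspace S" "subspace T" "S \<subset> T"
  shows "dim S < dim T"
  using dim_psubset[of S T] assms by (simp only: span_eq_iff[THEN iffD2])

lemma dim_strict_chain_ge:
  assumes "\<And>j. subspace (K j)" "\<And>j. j < n \<Longrightarrow> K j \<subset> K (Suc j)"
  shows "n \<le> dim (K n)"
  using assms(2)
proof (induction n)
  case (Suc n)
  then have "dim (K n) < dim (K (Suc n))"
    using dim_psubset_subspace assms(1) by simp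
  with Suc show ?case by simp
qed simp

lemma subspace_chain_stabilizes:
  assumes "\<And>j. subspace (K j)" "\<And>j. K j \<subseteq> K (Suc j)"
  obtains j where "j \<le> dimension" "K (Suc j) = K j"
proof -
  have "\<exists>j\<le>dimension. K (Suc j) = K j"
  proof (rule ccontr)
    assume "\<not> ?thesis"
    then have "K j \<subset> K (Suc j)" if "j < Suc dimension" for j
      using that assms(2) by (metis less_Suc_eq_le psubsetI)
    then have "Suc dimension \<le> dim (K (Suc dimension))"
      using dim_strict_chain_ge[of K] assms(1) by blast
    then show False
      using dim_subset_UNIV[of "K (Suc dimension)"] by simp
  qed
  then show thesis using that by blast
qed

lemma funpow_mem_invariant_subspace_dimension:
  assumes f: "Vector_Spaces.linear scale scale f" and U: "subspace U"
    and fU: "\<And>u. u \<in> U \<Longrightarrow> f u \<in> U" and v: "(f ^^ n) v \<in> U"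
  shows "(f ^^ dimension) v \<in> U"
proof -
  define K where "K j = {v. (f ^^ j) v \<in> U}" for j
  have mono: "K j \<subseteq> K (Suc j)" for j
    unfolding K_def using fU by auto
  then have mono_le: "i \<le> i' \<Longrightarrow> K i \<subseteq> K i'" for i i'
    by (rule lift_Suc_mono_le)
  obtain j where j: "j \<le> dimension" "K (Suc j) = K j"
    using subspace_chain_stabilizes[of K] subspace_funpow_preimage[OF f U] mono
    unfolding K_def by blast
  have stable: "K (Suc j + i) \<subseteq> K j" for i
  proof (induction i)
    case (Suc i)
    have "f x \<in> K (Suc j + i)" if "x \<in> K (Suc j + Suc i)" for x
      using that unfolding K_def by (simp add: funpow_Suc_right del: funpow.simps)
    with Suc have "x \<in> K (Suc j)" if "x \<in> K (Suc j + Suc i)" for x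
      using that unfolding K_def by (auto simp: funpow_Suc_right simp del: funpow.simps)
    with j(2) show ?case by blast
  qed (use j in simp)
  have "v \<in> K n" unfolding K_def using v by simp
  moreover have "K n \<subseteq> K dimension"
  proof (cases "n \<le> dimension")
    case False
    then have "K n \<subseteq> K j"
      using stable[of "n - Suc j"] j(1) by simp
    then show ?thesis using mono_le[OF j(1)] by blast
  qed (rule mono_le)
  ultimately show ?thesis unfolding K_def by blast
qed

end

locale lie_alg = vector_space scale
  for scale :: "'k::field \<Rightarrow> 'L::ab_group_add \<Rightarrow> 'L" (infixr \<open>*s\<close> 75) +
  fixes br :: "'L \<Rightarrow> 'L \<Rightarrow> 'L"
  assumes lie_algebra: "lie_algebra scale br"

sublocale lie_alg \<subseteq> endo: vector_space_pair scale scale ..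

context lie_alg
begin

lemma linear_br_right: "Vector_Spaces.linear scale scale (br x)"
  using lie_algebra unfolding lie_algebra_def by blast

lemma linear_br_left: "Vector_Spaces.linear scale scale (\<lambda>x. br x y)"
  using lie_algebra unfolding lie_algebra_def by blast

lemma br_self [simp]: "br x x = 0"
  using lie_algebra unfolding lie_algebra_def by blast

lemma jacobi: "br x (br y z) + br y (br z x) + br z (br x y) = 0"
  using lie_algebra unfolding lie_algebra_def by blast

lemma br_add_right: "br x (y + z) = br x y + br x z"
  by (rule endo.linear_add[OF linear_br_right])

lemma br_add_left: "br (x + y) z = br x z + br y z"
  using endo.linear_add[OF linear_br_left] .

lemma br_scale_right: "br x (c *s y) = c *s br x y"
  by (rule endo.linear_scale[OF linear_br_right])

lemma br_zero_left [simp]: "br 0 x = 0"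
  using endo.linear_0[OF linear_br_left] .

lemma br_anticomm: "br y x = - br x y"
proof -
  have "br (x + y) (x + y) = br x x + br y x + (br x y + br y y)"
    by (simp only: br_add_left br_add_right)
  then show ?thesis by (simp add: eq_neg_iff_add_eq_0)
qed

lemma br_leibniz: "br (br v c) h = br (br v h) c + br v (br c h)"
proof -
  have "br h (br v c) = - (br v (br c h) + br c (br h v))"
    using jacobi[of h v c] by (metis add.assoc eq_neg_iff_add_eq_0)
  then show ?thesis
    using br_anticomm[of "br v c" h] br_anticomm[of "br v h" c] br_anticomm[of v h]
      endo.linear_neg[OF linear_br_right] by (simp add: add.commute)
qed

lemma linear_ad: "Vector_Spaces.linear scale scale (ad br x)"
  unfolding ad_def by (rule linear_br_left)

lemma ad_add_scale: "ad br (x + t *s w) = (\<lambda>v. ad br x v + t *s ad br w v)"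
  unfolding ad_def by (simp add: br_add_right br_scale_right)

lemma derivation_ad: "derivation scale br (ad br z)"
  unfolding derivation_def ad_def using linear_br_left br_leibniz by blast

definition lie_subalgebra :: "'L set \<Rightarrow> bool" where
  "lie_subalgebra H \<longleftrightarrow> subspace H \<and> (\<forall>a\<in>H. \<forall>b\<in>H. br a b \<in> H)"

definition ad_invariant :: "'L set \<Rightarrow> 'L set \<Rightarrow> bool" where
  "ad_invariant H U \<longleftrightarrow> (\<forall>h\<in>H. \<forall>u\<in>U. br u h \<in> U)"

definition annihilator :: "'L set \<Rightarrow> 'L set \<Rightarrow> 'L set \<Rightarrow> 'L set" where
  "annihilator H U V = {h \<in> H. \<forall>v\<in>V. br v h \<in> U}"

lemma subspace_br_right_preimage: "subspace U \<Longrightarrow> subspace {y. br x y \<in> U}"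
  using endo.linear_subspace_vimage[OF linear_br_right] by (simp add: vimage_def)

lemma subspace_br_left_preimage: "subspace U \<Longrightarrow> subspace {x. br x y \<in> U}"
  using endo.linear_subspace_vimage[OF linear_br_left] by (simp add: vimage_def)

lemma br_span_mem:
  assumes S: "subspace S" and gen: "\<And>a b. a \<in> A \<Longrightarrow> b \<in> B \<Longrightarrow> br a b \<in> S"
    and "x \<in> span A" "y \<in> span B"
  shows "br x y \<in> S"
proof -
  have "span B \<subseteq> {y. br a y \<in> S}" if "a \<in> A" for a
    using gen that by (intro span_minimal subspace_br_right_preimage[OF S]) auto
  then have "span A \<subseteq> (\<Inter>y\<in>span B. {x. br x y \<in> S})"
    by (intro span_minimal subspace_Inter) (auto intro: subspace_br_left_preimage[OF S])
  then show ?thesis using assms(3,4) by blast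
qed

lemma lie_subalgebra_span_insert:
  assumes K: "lie_subalgebra K" and hK: "\<And>k. k \<in> K \<Longrightarrow> br h k \<in> K"
  shows "lie_subalgebra (span (insert h K))"
proof -
  have "br a b \<in> span (insert h K)" if ab: "a \<in> insert h K" "b \<in> insert h K" for a b
  proof -
    consider "a \<in> K" "b \<in> K" | "a = h" "b \<in> K" | "a \<in> K" "b = h" | "a = h" "b = h"
      using ab by blast
    then show ?thesis
    proof cases
      case 1
      then show ?thesis using K by (simp add: lie_subalgebra_def span_base)
    next
      case 2
      then show ?thesis using hK by (simp add: span_base)
    next
      case 3
      then have "- br a b \<in> K" using hK br_anticomm[of a h] by simp
      then show ?thesis by (metis minus_minus span_base span_neg insertI2)
    next
      case 4
      then show ?thesis by (simp add: span_zero)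
    qed
  qed
  then show ?thesis
    unfolding lie_subalgebra_def by (blast intro: br_span_mem subspace_span)
qed

lemma annihilator_lie_subalgebra:
  assumes H: "lie_subalgebra H" and U: "subspace U" and HU: "ad_invariant H U"
  shows "lie_subalgebra (annihilator H U V)"
proof -
  have "annihilator H U V = H \<inter> (\<Inter>v\<in>V. {h. br v h \<in> U})"
    unfolding annihilator_def by blast
  then have "subspace (annihilator H U V)"
    using H U
    by (auto simp: lie_subalgebra_def intro!: subspace_inter subspace_Inter subspace_br_right_preimage)
  moreover have "br c c' \<in> annihilator H U V"
    if "c \<in> annihilator H U V" "c' \<in> annihilator H U V" for c c'
  proof -
    have "br (br v c) c' - br (br v c') c \<in> U" if "v \<in> V" for v
      using \<open>c \<in> _\<close> \<open>c' \<in> _\<close> HU U that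
      unfolding annihilator_def ad_invariant_def by (blast intro: subspace_diff)
    then show ?thesis
      using that H unfolding annihilator_def lie_subalgebra_def
      by (simp add: br_leibniz[of _ c c'])
  qed
  ultimately show ?thesis
    using H unfolding lie_subalgebra_def annihilator_def by blast
qed

lemma ad_funpow_mem_annihilator:
  assumes H: "lie_subalgebra H" and U: "subspace U" and V: "subspace V" and UV: "U \<subseteq> V"
    and HU: "ad_invariant H U" and HV: "ad_invariant H V" and k: "k \<in> H" and h: "h \<in> H"
    and nil: "\<And>v. v \<in> V \<Longrightarrow> (ad br k ^^ n) v \<in> U"
  shows "(ad br k ^^ (2 * n)) h \<in> annihilator H U V"
proof -
  define W where "W j = V \<inter> {v. (ad br k ^^ j) v \<in> U}" for j
  have kU: "ad br k u \<in> U" if "u \<in> U" for u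
    using HU k that unfolding ad_invariant_def ad_def by blast
  have kV: "br v k \<in> V" if "v \<in> V" for v
    using HV k that unfolding ad_invariant_def by blast
  have subspace_W: "subspace (W j)" for j
    unfolding W_def using V U by (intro subspace_inter subspace_funpow_preimage linear_ad)
  have W0: "W 0 = U"
    using UV unfolding W_def by auto
  have U_W: "U \<subseteq> W j" for j
    using UV funpow_preserves[of U "ad br k", OF kU] unfolding W_def by auto
  have W_mono: "i \<le> j \<Longrightarrow> W i \<subseteq> W j" for i j
    by (rule lift_Suc_mono_le) (auto simp: W_def kU)
  have W_shift: "br v k \<in> W (j - 1)" if "v \<in> W j" for v j
  proof (cases j)
    case 0
    then show ?thesis using that kU W0 by (simp add: ad_def)
  next
    case (Suc i)
    then show ?thesis
      using that kV unfolding W_def by (simp add: funpow_Suc_right ad_def del: funpow.simps)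
  qed
  have H_iter: "(ad br k ^^ m) h \<in> H" for m
    using H k h unfolding lie_subalgebra_def ad_def by (intro funpow_preserves) auto
  \<comment> \<open>By the Leibniz rule, each application of \<open>ad k\<close> to \<open>h\<close> costs at most one level of \<open>W\<close>.\<close>
  have filtration: "br v ((ad br k ^^ m) h) \<in> W (n + j - m)" if "v \<in> W j" for m j v
    using that
  proof (induction m arbitrary: j v)
    case 0
    then have "br v h \<in> W n"
      using nil HV h unfolding W_def ad_invariant_def by auto
    then show ?case using W_mono[of n "n + j"] by auto
  next
    case (Suc m)
    define g where "g = (ad br k ^^ m) h"
    have "g \<in> H" unfolding g_def by (rule H_iter)
    have "br (br v g) k \<in> W (n + j - Suc m)"
      using W_shift[OF Suc.IH[OF Suc.prems]] unfolding g_def by simp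
    moreover have "br (br v k) g \<in> W (n + j - Suc m)"
    proof (cases j)
      case 0
      then have "br (br v k) g \<in> U"
        using Suc.prems W0 kU \<open>g \<in> H\<close> HU unfolding ad_invariant_def ad_def by blast
      then show ?thesis using U_W by blast
    next
      case (Suc i)
      then show ?thesis
        using Suc.IH[OF W_shift[OF Suc.prems]] unfolding g_def by simp
    qed
    ultimately have "br (br v g) k - br (br v k) g \<in> W (n + j - Suc m)"
      by (rule subspace_diff[OF subspace_W])
    then show ?case
      unfolding g_def by (simp add: ad_def br_leibniz[of v _ k])
  qed
  have "br v ((ad br k ^^ (2 * n)) h) \<in> U" if "v \<in> V" for v
    using filtration[of v n "2 * n"] nil[OF that] that W0 unfolding W_def by auto
  then show ?thesis
    using H_iter unfolding annihilator_def by blast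
qed

lemma exists_annihilated_by_span_insert:
  assumes U: "subspace U" and hU: "ad_invariant {h} U" and hV: "ad_invariant {h} V"
    and hK: "\<And>k. k \<in> K \<Longrightarrow> br h k \<in> K"
    and w: "w \<in> V - U" "\<And>k. k \<in> K \<Longrightarrow> br w k \<in> U" and nil: "(ad br h ^^ m) w \<in> U"
  obtains v where "v \<in> V - U" "\<And>x. x \<in> span (insert h K) \<Longrightarrow> br v x \<in> U"
proof -
  define W where "W = {v \<in> V. \<forall>k\<in>K. br v k \<in> U}"
  have "ad br h v \<in> W" if v: "v \<in> W" for v
  proof -
    have "br (br v h) k \<in> U" if "k \<in> K" for k
    proof -
      have "br (br v k) h \<in> U"
        using v that hU unfolding W_def ad_invariant_def by blast
      moreover have "br v (br h k) \<in> U"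
        using v that hK unfolding W_def by blast
      ultimately show ?thesis
        unfolding br_leibniz[of v h k] by (rule subspace_add[OF U])
    qed
    then show ?thesis
      using v hV unfolding W_def ad_invariant_def ad_def by blast
  qed
  then have W_iter: "(ad br h ^^ j) w \<in> W" for j
    using w by (intro funpow_preserves) (auto simp: W_def)
  obtain j where j: "(ad br h ^^ j) w \<notin> U" "ad br h ((ad br h ^^ j) w) \<in> U"
    using funpow_last_not_in[OF _ nil] w(1) by blast
  define v where "v = (ad br h ^^ j) w"
  have "span (insert h K) \<subseteq> {x. br v x \<in> U}"
    using j W_iter[of j] unfolding v_def W_def ad_def
    by (intro span_minimal subspace_br_right_preimage[OF U]) auto
  moreover have "v \<in> V - U"
    using j W_iter[of j] unfolding v_def W_def by blast
  ultimately show thesis using that by blast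
qed

end

locale fd_lie_alg = lie_alg scale br + finite_dimensional_vector_space scale Basis
  for scale :: "'k::field \<Rightarrow> 'L::ab_group_add \<Rightarrow> 'L" (infixr \<open>*s\<close> 75)
    and br :: "'L \<Rightarrow> 'L \<Rightarrow> 'L" and Basis :: "'L set"
begin

lemma ad_funpow_dimension_mem:
  assumes "subspace U" "ad_invariant {x} U" "(ad br x ^^ n) v \<in> U"
  shows "(ad br x ^^ dimension) v \<in> U"
  using funpow_mem_invariant_subspace_dimension[OF linear_ad assms(1) _ assms(3)] assms(2)
  unfolding ad_invariant_def ad_def by blast

lemma exists_maximal_lie_subalgebra:
  assumes "lie_subalgebra C" "C \<subset> H"
  obtains K where "lie_subalgebra K" "C \<subseteq> K" "K \<subset> H"
    "\<And>K'. lie_subalgebra K' \<Longrightarrow> K \<subseteq> K' \<Longrightarrow> K' \<subset> H \<Longrightarrow> K' = K"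
proof -
  define S where "S = {K. lie_subalgebra K \<and> C \<subseteq> K \<and> K \<subset> H}"
  have "C \<in> S" using assms unfolding S_def by blast
  then obtain K where K: "K \<in> S" and K_max: "\<And>K'. K' \<in> S \<Longrightarrow> dim K' \<le> dim K"
    using Lattices_Big.ex_has_greatest_nat[of "\<lambda>K. K \<in> S" C dim "Suc dimension"]
      dim_subset_UNIV by (metis le_imp_less_Suc)
  have "K' = K" if "lie_subalgebra K'" "K \<subseteq> K'" "K' \<subset> H" for K'
  proof (rule ccontr)
    assume "K' \<noteq> K"
    then have "dim K < dim K'"
      using that K dim_psubset_subspace unfolding S_def lie_subalgebra_def by blast
    moreover have "K' \<in> S" using that K unfolding S_def by blast
    ultimately show False using K_max by fastforce
  qed
  with K show thesis using that unfolding S_def by blast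
qed

lemma exists_ad_funpow_mem_annihilator:
  assumes "lie_subalgebra H" "subspace U" "subspace V" "U \<subseteq> V" "ad_invariant H U" "ad_invariant H V"
    and nil: "\<And>v. v \<in> V \<Longrightarrow> \<exists>m. (ad br k ^^ m) v \<in> U" and "k \<in> H" "h \<in> H"
  shows "\<exists>m. (ad br k ^^ m) h \<in> annihilator H U V"
proof -
  have "ad_invariant {k} U"
    using assms(5,8) unfolding ad_invariant_def by blast
  then have "(ad br k ^^ dimension) v \<in> U" if "v \<in> V" for v
    using nil[OF that] ad_funpow_dimension_mem[OF assms(2)] by blast
  then show ?thesis
    using ad_funpow_mem_annihilator[OF assms(1-6,8,9)] by blast
qed

text \<open>The pair \<open>U \<subseteq> V\<close> stands for the \<open>H\<close>-module \<open>V/U\<close>, which avoids quotient spaces.\<close>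

lemma engel_exists_annihilated:
  assumes "lie_subalgebra H" "subspace U" "subspace V" "U \<subset> V"
    "ad_invariant H U" "ad_invariant H V"
    "\<And>h v. h \<in> H \<Longrightarrow> v \<in> V \<Longrightarrow> \<exists>m. (ad br h ^^ m) v \<in> U"
  shows "\<exists>v\<in>V - U. \<forall>h\<in>H. br v h \<in> U"
  using assms
proof (induction "dim H" arbitrary: H U V rule: less_induct)
  case less
  note H = less.prems(1) and U = less.prems(2) and V = less.prems(3) and UV = less.prems(4)
    and HU = less.prems(5) and HV = less.prems(6) and nil = less.prems(7)
  let ?C = "annihilator H U V"
  show ?case
  proof (cases "?C = H")
    case True
    then show ?thesis using UV unfolding annihilator_def by blast
  next
    case False
    then have "?C \<subset> H" unfolding annihilator_def by blast
    then obtain K where K: "lie_subalgebra K" "?C \<subseteq> K" "K \<subset> H"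
      and K_max: "\<And>K'. lie_subalgebra K' \<Longrightarrow> K \<subseteq> K' \<Longrightarrow> K' \<subset> H \<Longrightarrow> K' = K"
      using exists_maximal_lie_subalgebra annihilator_lie_subalgebra[OF H U HU] by blast
    have sH: "subspace H" and sK: "subspace K"
      using H K(1) unfolding lie_subalgebra_def by blast+
    have dimK: "dim K < dim H" using dim_psubset_subspace[OF sK sH K(3)] .
    have "\<exists>m. (ad br k ^^ m) h \<in> K" if "k \<in> K" "h \<in> H" for k h
      using exists_ad_funpow_mem_annihilator[OF H U V _ HU HV nil] that K UV by blast
    moreover have "ad_invariant K K" "ad_invariant K H"
      using K H unfolding lie_subalgebra_def ad_invariant_def by blast+
    ultimately obtain h0 where h0: "h0 \<in> H - K" "\<And>k. k \<in> K \<Longrightarrow> br h0 k \<in> K"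
      using less.hyps[OF dimK K(1) sK sH K(3)] by blast
    have "span (insert h0 K) = H"
    proof -
      have "span (insert h0 K) \<subseteq> H"
        using h0(1) K(3) sH by (intro span_minimal) auto
      moreover have "span (insert h0 K) \<noteq> K"
        using h0(1) span_superset by blast
      ultimately show ?thesis
        using K_max[OF lie_subalgebra_span_insert[OF K(1) h0(2)]] span_superset by blast
    qed
    have "ad_invariant K U" "ad_invariant K V"
      using HU HV K(3) unfolding ad_invariant_def by blast+
    moreover have "\<exists>m. (ad br k ^^ m) v \<in> U" if "k \<in> K" "v \<in> V" for k v
      using nil K(3) that by blast
    ultimately obtain w where w: "w \<in> V - U" "\<And>k. k \<in> K \<Longrightarrow> br w k \<in> U"
      using less.hyps[OF dimK K(1) U V UV] by blast
    obtain m where "(ad br h0 ^^ m) w \<in> U"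
      using nil h0(1) w(1) by blast
    moreover have "ad_invariant {h0} U" "ad_invariant {h0} V"
      using HU HV h0(1) unfolding ad_invariant_def by blast+
    ultimately show ?thesis
      using exists_annihilated_by_span_insert[OF U _ _ h0(2) w] \<open>span (insert h0 K) = H\<close>
      by (metis DiffI)
  qed
qed

lemma mem_engel_elements_iff: "y \<in> engel_elements br \<longleftrightarrow> (\<forall>x. (ad br x ^^ dimension) y = 0)"
proof -
  have "(ad br x ^^ n) y = 0 \<Longrightarrow> (ad br x ^^ dimension) y = 0" for x n
    using ad_funpow_dimension_mem[OF subspace_single_0, of x n y] unfolding ad_invariant_def by simp
  then show ?thesis
    unfolding engel_elements_def engel_set_def by blast
qed

lemma subspace_engel_elements: "subspace (engel_elements br)"
proof -
  have E: "engel_elements br = (\<Inter>x. {y. (ad br x ^^ dimension) y \<in> {0}})"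
    by (auto simp: mem_engel_elements_iff)
  have "subspace {y. (ad br x ^^ dimension) y \<in> {0}}" for x
    by (rule subspace_funpow_preimage[OF linear_ad subspace_single_0])
  then show ?thesis
    unfolding E by (intro subspace_Inter) blast
qed

lemma derivation_engel_elements:
  assumes inf: "infinite (UNIV :: 'k set)" and D: "derivation scale br D"
    and y: "y \<in> engel_elements br"
  shows "D y \<in> engel_elements br"
  unfolding mem_engel_elements_iff
proof
  fix x
  let ?A = "ad br x" and ?B = "ad br (D x)"
  have linear_D: "Vector_Spaces.linear scale scale D"
    using D unfolding derivation_def by blast
  have DA: "D (?A v) = ?A (D v) + ?B v" for v
    using D unfolding derivation_def ad_def by blast
  have "pencil_coeff ?A ?B y dimension 1 = 0"
  proof (cases "dimension = 0")
    case True
    then show ?thesis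
      using pencil_coeff_eq_0 endo.linear_0[OF linear_ad] by simp
  next
    case False
    have vanish: "(\<Sum>k\<le>dimension. t ^ k *s pencil_coeff ?A ?B y dimension k) = 0" for t
      using funpow_pencil_expansion[OF linear_ad linear_ad, where n = dimension and t = t and y = y] y
      by (simp add: ad_add_scale[symmetric] mem_engel_elements_iff)
    show ?thesis
      using coeff_eq_0_if_polynomial_vanishes[OF inf vanish, of 1] False by simp
  qed
  then show "(?A ^^ dimension) (D y) = 0"
    using funpow_commutator[where A = ?A and B = ?B and D = D, OF linear_ad DA, of dimension y]
      y endo.linear_0[OF linear_D]
    by (simp add: mem_engel_elements_iff)
qed

lemma characteristic_ideal_engel_elements:
  assumes "infinite (UNIV :: 'k set)"
  shows "characteristic_ideal scale br (engel_elements br)"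
  using subspace_engel_elements derivation_engel_elements[OF assms]
    derivation_engel_elements[OF assms derivation_ad]
  unfolding characteristic_ideal_def lie_ideal_def ad_def by blast

primrec engel_series :: "nat \<Rightarrow> 'L set" where
  "engel_series 0 = {0}"
| "engel_series (Suc i) = {v \<in> engel_elements br. \<forall>h. br v h \<in> engel_series i}"

lemma subspace_engel_series: "subspace (engel_series i)"
proof (induction i)
  case (Suc i)
  have "engel_series (Suc i) = engel_elements br \<inter> (\<Inter>h. {v. br v h \<in> engel_series i})"
    by auto
  then show ?case
    using Suc subspace_engel_elements
    by (auto intro!: subspace_inter subspace_Inter subspace_br_left_preimage)
qed simp

lemma engel_series_subset: "engel_series i \<subseteq> engel_elements br"
  using subspace_0[OF subspace_engel_elements] by (cases i) auto

lemma engel_series_mono: "engel_series i \<subseteq> engel_series (Suc i)"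
  by (induction i) (auto simp: subspace_0[OF subspace_engel_elements])

context
  assumes ideal: "lie_ideal scale br (engel_elements br)"
begin

lemma ad_invariant_engel_series: "ad_invariant UNIV (engel_series i)"
proof (induction i)
  case 0
  then show ?case unfolding ad_invariant_def by simp
next
  case (Suc i)
  have "br (br v h') h \<in> engel_series i" if "v \<in> engel_series (Suc i)" for v h h'
  proof -
    have "br (br v h) h' \<in> engel_series i" "br v (br h' h) \<in> engel_series i"
      using that Suc unfolding ad_invariant_def by auto
    then show ?thesis
      unfolding br_leibniz[of v h' h] by (rule subspace_add[OF subspace_engel_series])
  qed
  then show ?case
    using ideal unfolding ad_invariant_def lie_ideal_def by auto
qed

lemma engel_series_psubset:
  assumes "engel_series i \<noteq> engel_elements br"
  shows "engel_series i \<subset> engel_series (Suc i)"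
proof -
  have "lie_subalgebra UNIV"
    unfolding lie_subalgebra_def by simp
  moreover have "engel_series i \<subset> engel_elements br"
    using assms engel_series_subset by blast
  moreover have "ad_invariant UNIV (engel_elements br)"
    using ideal unfolding ad_invariant_def lie_ideal_def by blast
  moreover have "\<exists>m. (ad br h ^^ m) v \<in> engel_series i" if v: "v \<in> engel_elements br" for h v
  proof -
    obtain m where "(ad br h ^^ m) v = 0"
      using v unfolding engel_elements_def engel_set_def by blast
    moreover have "0 \<in> engel_series i"
      by (rule subspace_0[OF subspace_engel_series])
    ultimately have "(ad br h ^^ m) v \<in> engel_series i" by simp
    then show ?thesis ..
  qed
  ultimately have "\<exists>v\<in>engel_elements br - engel_series i. \<forall>h\<in>UNIV. br v h \<in> engel_series i"
    by (rule engel_exists_annihilated[OF _ subspace_engel_series subspace_engel_elements _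
          ad_invariant_engel_series])
  then show ?thesis
    using engel_series_mono[of i] by auto
qed

lemma engel_series_eventually_eq: "\<exists>i. engel_series i = engel_elements br"
proof -
  obtain i where "engel_series (Suc i) = engel_series i"
    using subspace_chain_stabilizes[of engel_series, OF subspace_engel_series engel_series_mono] .
  then show ?thesis
    using engel_series_psubset[of i] by auto
qed

lemma nilpotent_engel_elements: "nilpotent_set scale br (engel_elements br)"
proof -
  let ?E = "engel_elements br"
  obtain i where i: "engel_series i = ?E"
    using engel_series_eventually_eq by blast
  have lower_central_subset: "lower_central scale br ?E j \<subseteq> engel_series (i - j)" for j
  proof (induction j)
    case (Suc j)
    have "br a b \<in> engel_series (i - Suc j)" if "a \<in> lower_central scale br ?E j" for a b
    proof (cases "i - j")
      case 0
      then show ?thesis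
        using that Suc subspace_0[OF subspace_engel_series] by auto
    next
      case (Suc i')
      then have "i - Suc j = i'" by simp
      with Suc show ?thesis
        using that \<open>lower_central scale br ?E j \<subseteq> _\<close> by auto
    qed
    then have "{br a b |a b. a \<in> lower_central scale br ?E j \<and> b \<in> ?E} \<subseteq> engel_series (i - Suc j)"
      by blast
    then show ?case
      by (simp add: span_minimal subspace_engel_series)
  qed (simp add: i)
  have "0 \<in> lower_central scale br ?E j" for j
    by (cases j) (auto simp: span_zero subspace_0[OF subspace_engel_elements])
  then have "lower_central scale br ?E i = {0}"
    using lower_central_subset[of i] by auto
  then show ?thesis
    unfolding nilpotent_set_def by blast
qed

lemma engel_elements_subset_nilradical: "engel_elements br \<subseteq> nilradical scale br"
proof -
  have "engel_elements br \<subseteq> \<Union>{I. lie_ideal scale br I \<and> nilpotent_set scale br I}"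
    using ideal nilpotent_engel_elements by blast
  then show ?thesis
    unfolding nilradical_def using span_superset by blast
qed

end

end

theorem theorem2p2:
  fixes sc :: "'k::field_char_0 \<Rightarrow> 'L::ab_group_add \<Rightarrow> 'L"
    and br :: "'L \<Rightarrow> 'L \<Rightarrow> 'L"
  assumes "lie_algebra sc br"
    and "finite_dimensional sc"
  shows "characteristic_ideal sc br (engel_elements br)
         \<and> engel_elements br \<subseteq> nilradical sc br"
proof -
  have vs: "vector_space sc"
    using assms(1) unfolding lie_algebra_def by blast
  obtain S where S: "finite S" "module.span sc S = UNIV"
    using assms(2) unfolding finite_dimensional_def by blast
  obtain B where B: "\<not> module.dependent sc B" "UNIV \<subseteq> module.span sc B"
    using vector_space.basis_exists[OF vs, of UNIV] by blast
  have "finite B"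
    using vector_space.independent_span_bound[OF vs S(1) B(1)] S(2) by blast
  then interpret fd_lie_alg sc br B
  proof unfold_locales
    show "module.span sc B = UNIV" using B(2) by blast
  qed (use vs assms(1) B(1) in \<open>auto simp: vector_space_def\<close>)
  have "characteristic_ideal sc br (engel_elements br)"
    using characteristic_ideal_engel_elements infinite_UNIV_char_0 by blast
  then show ?thesis
    using engel_elements_subset_nilradical unfolding characteristic_ideal_def by blast
qed

end
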